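(* Suppose $\mathbb P^1_i=U(0,1)$ for all $i\in\mathcal H_1$. Then for $\ell=0,\dots,N$, $$\mathbb P(\tilde k=\ell)=\frac{1-q}{1-q+\frac{(N-\ell)q}{N}}\cdot\mathbb P\big(B^{\mathcal N}_{1:\ell}=\ell\big),\qquad \mathbb P\big(B^{\mathcal N}_{1:\ell}=\ell\big)=\binom{N}{\ell}\Big(\frac{q\ell}{N}\Big)^{\ell}\Big(1-\frac{q\ell}{N}\Big)^{N-\ell},$$ with the convention $0^0=1$. Moreover, for an integer $c\ge1$, on the event $B^0_{N+1}\ge c$, $$\mathbb P\big(\tilde k_{+c}=c\,\big|\,B^0_{N+1}\big)=\Big(1-\frac{cq}{N}\Big)^{N_1}\Big(1-\frac{c}{N}\Big)^{N_0-B^0_{N+1}}\Big(1-\frac{N_0-B^0_{N+1}}{N-c}-\frac{N_1q}{N-cq}\Big).$$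
   Context: Setting: $N\ge 1$ tests indexed by $\mathcal N=\{1,\dots,N\}=\mathcal H_0\sqcup\mathcal H_1$ (null and alternative indices), $N_0=|\mathcal H_0|$, $N_1=|\mathcal H_1|$. The p-values $p=(p_i)_{i\in\mathcal N}$ are jointly independent, with $p_i\sim U(0,1)$ for $i\in\mathcal H_0$ and $p_i\sim\mathbb P^1_i$ for $i\in\mathcal H_1$. Fix $q\in(0,1)$. Bins: $B_i=\{x:(i-1)q/N\le x<iq/N\}$ for $i=1,\dots,N$, and $B_{N+1}=[q,1]$. Loads: $B^0_i=|\{j\in\mathcal H_0:p_j\in B_i\}|$, $B^{\mathcal N}_i=|\{j\in\mathcal N:p_j\in B_i\}|$; $B^{\ast}_{a:b}=\sum_{l=a}^bB^\ast_l$, $B^\ast_{1:0}=0$. Rejection count $\tilde k=\max\{i\in\{0,\dots,N\}:B^{\mathcal N}_{1:i}=i\}$; $\tilde k_{+c}=\max\{i\in\{c,\dots,N\}:B^{\mathcal N}_{1:i}=i-c\}$ if $B^0_{N+1}\ge c$, and $\tilde k_{+c}=\tilde k$ otherwise. *)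

theory Defs
  imports "HOL-Probability.Probability"
begin

definition bin :: "nat \<Rightarrow> real \<Rightarrow> nat \<Rightarrow> real set" where
  "bin N q i = (if i = N + 1 then {x. q \<le> x \<and> x \<le> 1}
                else {x. real (i - 1) * q / real N \<le> x \<and> x < real i * q / real N})"

definition load :: "nat set \<Rightarrow> nat \<Rightarrow> real \<Rightarrow> (nat \<Rightarrow> real) \<Rightarrow> nat \<Rightarrow> nat" where
  "load S N q p i = card {j\<in>S. p j \<in> bin N q i}"

definition loadsum :: "nat set \<Rightarrow> nat \<Rightarrow> real \<Rightarrow> (nat \<Rightarrow> real) \<Rightarrow> nat \<Rightarrow> nat \<Rightarrow> nat" where
  "loadsum S N q p a b = (\<Sum>l=a..b. load S N q p l)"

definition ktilde :: "nat \<Rightarrow> real \<Rightarrow> (nat \<Rightarrow> real) \<Rightarrow> nat" where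
  "ktilde N q p = Max {i\<in>{0..N}. loadsum {1..N} N q p 1 i = i}"

text \<open>\<tilde>k_{+c}; H0 is the set of null indices.\<close>
definition ktilde_plus :: "nat set \<Rightarrow> nat \<Rightarrow> nat \<Rightarrow> real \<Rightarrow> (nat \<Rightarrow> real) \<Rightarrow> nat" where
  "ktilde_plus H0 c N q p =
     (if load H0 N q p (N + 1) \<ge> c
      then Max {i\<in>{c..N}. loadsum {1..N} N q p 1 i = i - c}
      else ktilde N q p)"

text \<open>Joint law of independent p-values, all U(0,1) (case P^1_i = U(0,1)).\<close>
definition pmodel :: "nat \<Rightarrow> (nat \<Rightarrow> real) measure" where
  "pmodel N = PiM {1..N} (\<lambda>_. uniform_measure lborel {0..1})"

end

theory Submission
  imports Defs
begin

(* Only the bin of each p-value matters: under the model the bins of p_1, ..., p_N are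
   independent, with probability q/N for each of the bins 1..N and 1 - q for the top bin
   [q,1].  With phi(i) the number of p-values in the first i bins, k~ is the largest fixed
   point of the monotone map phi on {0..N}, so k~ = l exactly when phi(l) = l and
   phi(i) < i for l < i <= N; likewise, given at least c null p-values in the top bin,
   k~_{+c} = c exactly when no p-value lies in the first c bins and phi(i) + c < i for
   c < i <= N.  Once the p-values in the first l bins are fixed, what remains is a
   ballot-type sum: for weights a_j on the bins 1..n and b_j on the top bin, the total
   weight of the assignments with phi(i) < i for all i <= n is F(n) - F'(n), where
   F(x) = prod_j (a_j x + b_j), provided at most n of the a_j are nonzero.  This rests on
   the count n^t - t n^(t-1) of such assignments of t <= n indices to the bins 1..n, which
   is proved by induction on n.  Conditioning on the set of null indices in the top bin
   only changes the weights. *)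

section \<open>Counting assignments that stay below the diagonal\<close>

lemma sum_Pow_power_minus_deriv:
  fixes a b :: "'a \<Rightarrow> real"
  assumes J: "finite J"
    and D: "((\<lambda>y. \<Prod>j\<in>J. y * a j + b j) has_real_derivative D) (at x)"
  shows "(\<Sum>T\<in>Pow J. (\<Prod>j\<in>J - T. b j) * (\<Prod>j\<in>T. a j)
            * (x ^ card T - real (card T) * x ^ (card T - 1)))
         = (\<Prod>j\<in>J. x * a j + b j) - D"
proof -
  define w where "w T = (\<Prod>j\<in>J - T. b j) * (\<Prod>j\<in>T. a j)" for T
  have expand: "(\<lambda>y. \<Prod>j\<in>J. y * a j + b j) = (\<lambda>y. \<Sum>T\<in>Pow J. w T * y ^ card T)"
  proof
    fix y
    have "(\<Prod>j\<in>J. y * a j + b j) = (\<Sum>T\<in>Pow J. (\<Prod>j\<in>T. y * a j) * (\<Prod>j\<in>J - T. b j))"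
      using J by (rule prod_add)
    also have "\<dots> = (\<Sum>T\<in>Pow J. w T * y ^ card T)"
      unfolding w_def by (intro sum.cong refl) (simp add: prod.distrib)
    finally show "(\<Prod>j\<in>J. y * a j + b j) = (\<Sum>T\<in>Pow J. w T * y ^ card T)" .
  qed
  have "((\<lambda>y. \<Sum>T\<in>Pow J. w T * y ^ card T) has_real_derivative
          (\<Sum>T\<in>Pow J. w T * (real (card T) * x ^ (card T - 1)))) (at x)"
    by (auto intro!: derivative_eq_intros sum.cong)
  with D have "D = (\<Sum>T\<in>Pow J. w T * (real (card T) * x ^ (card T - 1)))"
    unfolding expand by (rule DERIV_unique)
  then show ?thesis
    using fun_cong[OF expand, of x]
    by (simp add: w_def sum_subtractf right_diff_distrib mult.assoc)
qed

definition subdiagonal :: "nat \<Rightarrow> 'a set \<Rightarrow> ('a \<Rightarrow> nat) \<Rightarrow> bool" where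
  "subdiagonal n J f \<longleftrightarrow> (\<forall>i\<in>{1..n}. card {j\<in>J. f j \<le> i} < i)"

lemma sum_PiE_split_preimage:
  assumes "finite J" "finite L" "finite H" "L \<inter> H = {}"
  shows "(\<Sum>f\<in>PiE J (\<lambda>_. L \<union> H). F f)
       = (\<Sum>T\<in>Pow J. \<Sum>g\<in>PiE T (\<lambda>_. L). \<Sum>h\<in>PiE (J - T) (\<lambda>_. H).
            F (\<lambda>j. if j \<in> T then g j else h j))"
proof -
  let ?glue = "\<lambda>(T, g, h) j. if j \<in> T then g j else h j"
  let ?cut = "\<lambda>f. let T = {j\<in>J. f j \<in> L} in (T, restrict f T, restrict f (J - T))"
  have "(\<Sum>f\<in>PiE J (\<lambda>_. L \<union> H). F f)
      = (\<Sum>(T, g, h)\<in>(SIGMA T:Pow J. PiE T (\<lambda>_. L) \<times> PiE (J - T) (\<lambda>_. H)).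
            F (\<lambda>j. if j \<in> T then g j else h j))"
  proof (rule sum.reindex_bij_witness[where i = ?glue and j = ?cut])
    fix f assume f: "f \<in> PiE J (\<lambda>_. L \<union> H)"
    then show "?cut f \<in> (SIGMA T:Pow J. PiE T (\<lambda>_. L) \<times> PiE (J - T) (\<lambda>_. H))"
      by (auto simp: Let_def PiE_iff)
    have "?glue (?cut f) = f"
      using f by (auto simp: Let_def PiE_iff extensional_def fun_eq_iff)
    then show "?glue (?cut f) = f" "(case ?cut f of (T, g, h) \<Rightarrow> F (\<lambda>j. if j \<in> T then g j else h j)) = F f"
      by (simp_all add: Let_def)
  next
    fix t assume t: "t \<in> (SIGMA T:Pow J. PiE T (\<lambda>_. L) \<times> PiE (J - T) (\<lambda>_. H))"
    then show "?cut (?glue t) = t"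
      using assms(4) by (fastforce simp: Let_def PiE_iff extensional_def fun_eq_iff)
    show "?glue t \<in> PiE J (\<lambda>_. L \<union> H)"
      using t by (auto simp: PiE_iff extensional_def)
  qed
  also have "\<dots> = (\<Sum>T\<in>Pow J. \<Sum>g\<in>PiE T (\<lambda>_. L). \<Sum>h\<in>PiE (J - T) (\<lambda>_. H).
            F (\<lambda>j. if j \<in> T then g j else h j))"
    using assms by (subst sum.Sigma[symmetric]) (auto simp: sum.cartesian_product finite_PiE finite_subset intro!: finite_cartesian_product)
  finally show ?thesis .
qed

lemma sum_subdiagonal_Pow:
  fixes a b :: "'a \<Rightarrow> real"
  assumes J: "finite J"
  shows "(\<Sum>f\<in>{f\<in>PiE J (\<lambda>_. {1..n+1}). subdiagonal n J f}. \<Prod>j\<in>J. if f j \<le> n then a j else b j)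
       = (\<Sum>T\<in>Pow J. (\<Prod>j\<in>J - T. b j) * (\<Prod>j\<in>T. a j)
            * real (card {g\<in>PiE T (\<lambda>_. {1..n}). subdiagonal n T g}))"
    (is "_ = (\<Sum>T\<in>Pow J. ?p T * ?c T)")
proof -
  let ?w = "\<lambda>f. \<Prod>j\<in>J. if f j \<le> n then a j else b j"
  let ?F = "\<lambda>f. if subdiagonal n J f then ?w f else 0"
  have "(\<Sum>f\<in>{f\<in>PiE J (\<lambda>_. {1..n+1}). subdiagonal n J f}. ?w f) = (\<Sum>f\<in>PiE J (\<lambda>_. {1..n} \<union> {n+1}). ?F f)"
    using J by (simp add: sum.inter_filter finite_PiE atLeastAtMostSuc_conv)
  also have "\<dots> = (\<Sum>T\<in>Pow J. \<Sum>g\<in>PiE T (\<lambda>_. {1..n}). \<Sum>h\<in>PiE (J - T) (\<lambda>_. {n+1}).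
                     ?F (\<lambda>j. if j \<in> T then g j else h j))"
    using J by (rule sum_PiE_split_preimage) auto
  also have "\<dots> = (\<Sum>T\<in>Pow J. ?p T * ?c T)"
  proof (intro sum.cong refl)
    fix T assume T: "T \<in> Pow J"
    have top: "PiE (J - T) (\<lambda>_. {n+1}) = {\<lambda>j\<in>J - T. n + 1}"
      using PiE_singleton[of "\<lambda>j\<in>J - T. n + 1" "J - T"] by simp
    have "?F (\<lambda>j. if j \<in> T then g j else (\<lambda>j\<in>J - T. n + 1) j) = (if subdiagonal n T g then ?p T else 0)"
      if g: "g \<in> PiE T (\<lambda>_. {1..n})" for g
    proof -
      let ?f = "\<lambda>j. if j \<in> T then g j else (\<lambda>j\<in>J - T. n + 1) j"
      have "{j\<in>J. ?f j \<le> i} = {j\<in>T. g j \<le> i}" if "i \<le> n" for i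
        using T that by auto
      then have "subdiagonal n J ?f \<longleftrightarrow> subdiagonal n T g"
        unfolding subdiagonal_def by simp
      moreover have "?w ?f = (\<Prod>j\<in>J. if j \<in> T then a j else b j)"
        using T g by (intro prod.cong refl) (auto simp: PiE_iff)
      moreover have "(\<Prod>j\<in>J. if j \<in> T then a j else b j) = ?p T"
        using T J by (simp add: prod.If_cases Int_absorb1 Diff_eq)
      ultimately show ?thesis by simp
    qed
    then have "(\<Sum>g\<in>PiE T (\<lambda>_. {1..n}). \<Sum>h\<in>PiE (J - T) (\<lambda>_. {n+1}). ?F (\<lambda>j. if j \<in> T then g j else h j))
        = (\<Sum>g\<in>PiE T (\<lambda>_. {1..n}). if subdiagonal n T g then ?p T else 0)"
      unfolding top by (intro sum.cong refl) simp
    also have "\<dots> = ?p T * ?c T"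
      using finite_PiE[OF finite_subset[of T J], of "\<lambda>_. {1..n}"] T J
      by (simp add: sum.inter_filter[symmetric] mult.commute)
    finally show "(\<Sum>g\<in>PiE T (\<lambda>_. {1..n}). \<Sum>h\<in>PiE (J - T) (\<lambda>_. {n+1}).
        ?F (\<lambda>j. if j \<in> T then g j else h j)) = ?p T * ?c T" .
  qed
  finally show ?thesis .
qed

lemma subdiagonal_Suc_iff:
  assumes "finite T" "card T \<le> n"
  shows "subdiagonal (Suc n) T g \<longleftrightarrow> subdiagonal n T g"
proof -
  have "card {j\<in>T. g j \<le> Suc n} < Suc n"
    using card_mono[OF assms(1), of "{j\<in>T. g j \<le> Suc n}"] assms(2) by auto
  then show ?thesis by (auto simp: subdiagonal_def le_Suc_eq)
qed

lemma card_subdiagonal: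
  assumes "finite T" "card T \<le> n"
  shows "real (card {g\<in>PiE T (\<lambda>_. {1..n}). subdiagonal n T g})
       = real n ^ card T - real (card T) * real n ^ (card T - 1)"
  using assms
proof (induction n arbitrary: T)
  case 0
  then have "T = {}" by simp
  then show ?case by (simp add: subdiagonal_def)
next
  case (Suc n)
  show ?case
  proof (cases "card T = Suc n")
    case True
    have "\<not> subdiagonal (Suc n) T g" if "g \<in> PiE T (\<lambda>_. {1..Suc n})" for g
    proof -
      have "{j\<in>T. g j \<le> Suc n} = T" using that by (auto simp: PiE_iff)
      then show ?thesis using True by (auto simp: subdiagonal_def intro!: bexI[of _ "Suc n"])
    qed
    then have none: "{g\<in>PiE T (\<lambda>_. {1..Suc n}). subdiagonal (Suc n) T g} = {}" by blast
    show ?thesis unfolding none using True by simp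
  next
    case False
    with Suc.prems have small: "card T \<le> n" by simp
    \<comment> \<open>the constraint at Suc n is void, so split by the preimage of {1..n}\<close>
    have "real (card {g\<in>PiE T (\<lambda>_. {1..Suc n}). subdiagonal (Suc n) T g})
        = (\<Sum>U\<in>Pow T. real (card {g\<in>PiE U (\<lambda>_. {1..n}). subdiagonal n U g}))"
      using sum_subdiagonal_Pow[OF Suc.prems(1), of n "\<lambda>_. 1" "\<lambda>_. 1"]
        subdiagonal_Suc_iff[OF Suc.prems(1) small] by simp
    also have "\<dots> = (\<Sum>U\<in>Pow T. (\<Prod>j\<in>T - U. 1) * (\<Prod>j\<in>U. 1)
                      * (real n ^ card U - real (card U) * real n ^ (card U - 1)))"
    proof (intro sum.cong refl)
      fix U assume "U \<in> Pow T"
      then have U: "U \<subseteq> T" by simp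
      have "card U \<le> n" using card_mono[OF Suc.prems(1) U] small by linarith
      from Suc.IH[OF finite_subset[OF U Suc.prems(1)] this]
      show "real (card {g\<in>PiE U (\<lambda>_. {1..n}). subdiagonal n U g})
          = (\<Prod>j\<in>T - U. 1) * (\<Prod>j\<in>U. 1) * (real n ^ card U - real (card U) * real n ^ (card U - 1))"
        by simp
    qed
    also have "\<dots> = (\<Prod>j\<in>T. real n * 1 + 1) - real (card T) * (real n + 1) ^ (card T - 1)"
    proof (rule sum_Pow_power_minus_deriv[OF Suc.prems(1)])
      have power: "(\<lambda>y. \<Prod>j\<in>T. y * 1 + 1) = (\<lambda>y. (y + 1) ^ card T)" by simp
      show "((\<lambda>y. \<Prod>j\<in>T. y * 1 + 1) has_real_derivative real (card T) * (real n + 1) ^ (card T - 1)) (at (real n))"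
        unfolding power by (auto intro!: derivative_eq_intros)
    qed
    finally show ?thesis by (simp add: add.commute)
  qed
qed

lemma sum_subdiagonal:
  fixes a b :: "'a \<Rightarrow> real"
  assumes J: "finite J" and n: "card {j\<in>J. a j \<noteq> 0} \<le> n"
    and D: "((\<lambda>x. \<Prod>j\<in>J. x * a j + b j) has_real_derivative D) (at (real n))"
  shows "(\<Sum>f\<in>{f\<in>PiE J (\<lambda>_. {1..n+1}). subdiagonal n J f}. \<Prod>j\<in>J. if f j \<le> n then a j else b j)
       = (\<Prod>j\<in>J. real n * a j + b j) - D"
proof -
  have "(\<Prod>j\<in>J - T. b j) * (\<Prod>j\<in>T. a j) * real (card {g\<in>PiE T (\<lambda>_. {1..n}). subdiagonal n T g})
      = (\<Prod>j\<in>J - T. b j) * (\<Prod>j\<in>T. a j) * (real n ^ card T - real (card T) * real n ^ (card T - 1))"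
    if T: "T \<subseteq> J" for T
  proof (cases "\<exists>j\<in>T. a j = 0")
    case False
    then have "T \<subseteq> {j\<in>J. a j \<noteq> 0}" using T by auto
    then have "card T \<le> n" using n card_mono[of "{j\<in>J. a j \<noteq> 0}" T] J by fastforce
    then show ?thesis using card_subdiagonal[OF finite_subset[OF T J]] by simp
  qed (use T J in \<open>auto simp: finite_subset\<close>)
  then show ?thesis
    unfolding sum_subdiagonal_Pow[OF J] sum_Pow_power_minus_deriv[OF J D, symmetric]
    by (intro sum.cong refl) auto
qed

lemma sum_subdiagonal_const:
  fixes a b :: real
  assumes T: "finite T" and n: "card T \<le> n"
  shows "(\<Sum>g\<in>{g\<in>PiE T (\<lambda>_. {1..n+1}). subdiagonal n T g}. \<Prod>j\<in>T. if g j \<le> n then a else b)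
       = (real n * a + b) ^ card T - real (card T) * (real n * a + b) ^ (card T - 1) * a"
proof -
  have "card {j\<in>T. a \<noteq> 0} \<le> card T" using T by (intro card_mono) auto
  then have "card {j\<in>T. a \<noteq> 0} \<le> n" using n by linarith
  moreover have power: "(\<lambda>x. \<Prod>j\<in>T. x * a + b) = (\<lambda>x. (x * a + b) ^ card T)" by simp
  have "((\<lambda>x. \<Prod>j\<in>T. x * a + b) has_real_derivative
          real (card T) * (real n * a + b) ^ (card T - 1) * a) (at (real n))"
    unfolding power by (auto intro!: derivative_eq_intros)
  ultimately show ?thesis using sum_subdiagonal[OF T] by simp
qed

lemma sum_subdiagonal_shift:
  fixes w :: "'a \<Rightarrow> nat \<Rightarrow> real"
  assumes lN: "l \<le> N"
    and w: "\<And>j i. j \<in> T \<Longrightarrow> l < i \<Longrightarrow> i \<le> N + 1 \<Longrightarrow> w j i = (if i \<le> N then a j else b j)"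
  shows "(\<Sum>h\<in>{h\<in>PiE T (\<lambda>_. {l+1..N+1}). \<forall>i\<in>{l<..N}. card {j\<in>T. h j \<le> i} + l < i}. \<Prod>j\<in>T. w j (h j))
       = (\<Sum>g\<in>{g\<in>PiE T (\<lambda>_. {1..N-l+1}). subdiagonal (N - l) T g}. \<Prod>j\<in>T. if g j \<le> N - l then a j else b j)"
proof (rule sum.reindex_bij_witness[where i = "\<lambda>g. \<lambda>j\<in>T. g j + l" and j = "\<lambda>h. \<lambda>j\<in>T. h j - l"])
  fix h assume h: "h \<in> {h\<in>PiE T (\<lambda>_. {l+1..N+1}). \<forall>i\<in>{l<..N}. card {j\<in>T. h j \<le> i} + l < i}"
  then have range: "j \<in> T \<Longrightarrow> l + 1 \<le> h j \<and> h j \<le> N + 1" for j by (auto simp: PiE_iff)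
  with h show "(\<lambda>j\<in>T. (\<lambda>j\<in>T. h j - l) j + l) = h"
    by (auto simp: PiE_iff extensional_def fun_eq_iff)
  have "card {j\<in>T. (\<lambda>j\<in>T. h j - l) j \<le> i} < i" if "i \<in> {1..N - l}" for i
  proof -
    have "{j\<in>T. (\<lambda>j\<in>T. h j - l) j \<le> i} = {j\<in>T. h j \<le> i + l}" using range by force
    moreover have "i + l \<in> {l<..N}" using that by auto
    ultimately show ?thesis using h by fastforce
  qed
  moreover have "h j - l \<in> {1..N-l+1}" if "j \<in> T" for j using range[OF that] by auto
  ultimately show "(\<lambda>j\<in>T. h j - l) \<in> {g\<in>PiE T (\<lambda>_. {1..N-l+1}). subdiagonal (N - l) T g}"
    by (auto simp: subdiagonal_def PiE_iff cong: conj_cong)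
  show "(\<Prod>j\<in>T. if (\<lambda>j\<in>T. h j - l) j \<le> N - l then a j else b j) = (\<Prod>j\<in>T. w j (h j))"
  proof (rule prod.cong[OF refl])
    fix j assume "j \<in> T"
    then show "(if (\<lambda>j\<in>T. h j - l) j \<le> N - l then a j else b j) = w j (h j)"
      using range[of j] w[of j "h j"] lN by auto
  qed
next
  fix g assume g: "g \<in> {g\<in>PiE T (\<lambda>_. {1..N-l+1}). subdiagonal (N - l) T g}"
  then have range: "j \<in> T \<Longrightarrow> 1 \<le> g j \<and> g j \<le> N - l + 1" for j by (auto simp: PiE_iff)
  with g show "(\<lambda>j\<in>T. (\<lambda>j\<in>T. g j + l) j - l) = g"
    by (auto simp: PiE_iff extensional_def fun_eq_iff)
  have "card {j\<in>T. (\<lambda>j\<in>T. g j + l) j \<le> i} + l < i" if "i \<in> {l<..N}" for i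
  proof -
    have "{j\<in>T. (\<lambda>j\<in>T. g j + l) j \<le> i} = {j\<in>T. g j \<le> i - l}" using that by auto
    moreover have "i - l \<in> {1..N - l}" using that by auto
    ultimately show ?thesis using g that unfolding subdiagonal_def by fastforce
  qed
  moreover have "g j + l \<in> {l+1..N+1}" if "j \<in> T" for j using range[OF that] lN by auto
  ultimately show "(\<lambda>j\<in>T. g j + l) \<in> {h\<in>PiE T (\<lambda>_. {l+1..N+1}). \<forall>i\<in>{l<..N}. card {j\<in>T. h j \<le> i} + l < i}"
    by (auto simp: PiE_iff)
qed

section \<open>The last fixed point of a monotone map\<close>

lemma mono_fixpoint_between:
  fixes \<psi> :: "nat \<Rightarrow> nat"
  assumes mono: "mono \<psi>" and i: "i \<le> \<psi> i" "i \<le> b" and b: "\<psi> b \<le> b"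
  shows "\<exists>j\<in>{i..b}. \<psi> j = j"
proof -
  let ?S = "{k\<in>{i..b}. k \<le> \<psi> k}"
  define j where "j = Max ?S"
  have fin: "finite ?S" by simp
  have "i \<in> ?S" using i by simp
  then have j: "j \<in> ?S" unfolding j_def using fin by (intro Max_in) auto
  have max: "k \<le> j" if "k \<in> ?S" for k unfolding j_def using fin that by (rule Max_ge)
  have "\<psi> j \<le> j"
  proof (rule ccontr)
    assume up: "\<not> \<psi> j \<le> j"
    then have "j \<noteq> b" using b by auto
    with j have "Suc j \<le> b" by simp
    moreover have "Suc j \<le> \<psi> (Suc j)"
      using up monoD[OF mono, of j "Suc j"] by simp
    ultimately have "Suc j \<in> ?S" using j by simp
    then show False using max[of "Suc j"] by simp
  qed
  with j show ?thesis by (intro bexI[of _ j]) auto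
qed

lemma Max_fixpoints_eq_iff:
  fixes \<psi> :: "nat \<Rightarrow> nat"
  assumes mono: "mono \<psi>" and a: "a \<le> \<psi> a" and b: "\<psi> b \<le> b" and l: "a \<le> l" "l \<le> b"
  shows "Max {i\<in>{a..b}. \<psi> i = i} = l \<longleftrightarrow> \<psi> l = l \<and> (\<forall>i\<in>{l<..b}. \<psi> i < i)"
proof -
  let ?S = "{i\<in>{a..b}. \<psi> i = i}"
  have "?S \<noteq> {}" using mono_fixpoint_between[OF mono a _ b] l by auto
  then have "Max ?S = l \<longleftrightarrow> l \<in> ?S \<and> (\<forall>i\<in>?S. i \<le> l)" by (intro Max_eq_iff) auto
  also have "\<dots> \<longleftrightarrow> \<psi> l = l \<and> (\<forall>i\<in>{l<..b}. \<psi> i < i)"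
  proof
    assume max: "l \<in> ?S \<and> (\<forall>i\<in>?S. i \<le> l)"
    have "\<psi> i < i" if "i \<in> {l<..b}" for i
    proof (rule ccontr)
      assume "\<not> \<psi> i < i"
      then have "i \<le> \<psi> i" "i \<le> b" using that by auto
      then obtain j where "j \<in> {i..b}" "\<psi> j = j"
        using mono_fixpoint_between[OF mono _ _ b] by blast
      moreover have "a \<le> j" using l that \<open>j \<in> {i..b}\<close> by simp
      ultimately have "j \<le> l" using max by simp
      then show False using that \<open>j \<in> {i..b}\<close> by simp
    qed
    with max show "\<psi> l = l \<and> (\<forall>i\<in>{l<..b}. \<psi> i < i)" by auto
  next
    assume fix_l: "\<psi> l = l \<and> (\<forall>i\<in>{l<..b}. \<psi> i < i)"
    have "i \<le> l" if "i \<in> ?S" for i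
    proof (rule ccontr)
      assume "\<not> i \<le> l"
      with that have "i \<in> {l<..b}" by simp
      with fix_l have "\<psi> i < i" by blast
      with that show False by simp
    qed
    with fix_l l show "l \<in> ?S \<and> (\<forall>i\<in>?S. i \<le> l)" by auto
  qed
  finally show ?thesis .
qed

lemma sum_PiE_group_low_set:
  fixes w :: "'a \<Rightarrow> nat \<Rightarrow> real"
  assumes I: "finite I" and lN: "l \<le> N"
  shows "(\<Sum>f\<in>{f\<in>PiE I (\<lambda>_. {1..N+1}). Q {j\<in>I. f j \<le> l} (restrict f {j\<in>I. l < f j})}. \<Prod>j\<in>I. w j (f j))
       = (\<Sum>T\<in>Pow I. (\<Prod>j\<in>T. \<Sum>i\<in>{1..l}. w j i)
            * (\<Sum>h\<in>{h\<in>PiE (I - T) (\<lambda>_. {l+1..N+1}). Q T h}. \<Prod>j\<in>I - T. w j (h j)))"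
    (is "_ = (\<Sum>T\<in>Pow I. ?low T * ?high T)")
proof -
  let ?W = "\<lambda>f. \<Prod>j\<in>I. w j (f j)"
  let ?F = "\<lambda>f. if Q {j\<in>I. f j \<le> l} (restrict f {j\<in>I. l < f j}) then ?W f else 0"
  have "{1..N+1} = {1..l} \<union> {l+1..N+1}" using lN by auto
  then have "(\<Sum>f\<in>{f\<in>PiE I (\<lambda>_. {1..N+1}). Q {j\<in>I. f j \<le> l} (restrict f {j\<in>I. l < f j})}. ?W f)
      = (\<Sum>f\<in>PiE I (\<lambda>_. {1..l} \<union> {l+1..N+1}). ?F f)"
    using I by (simp add: sum.inter_filter finite_PiE)
  also have "\<dots> = (\<Sum>T\<in>Pow I. \<Sum>g\<in>PiE T (\<lambda>_. {1..l}). \<Sum>h\<in>PiE (I - T) (\<lambda>_. {l+1..N+1}).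
                     ?F (\<lambda>j. if j \<in> T then g j else h j))"
    using I by (rule sum_PiE_split_preimage) auto
  also have "\<dots> = (\<Sum>T\<in>Pow I. \<Sum>g\<in>PiE T (\<lambda>_. {1..l}). \<Sum>h\<in>PiE (I - T) (\<lambda>_. {l+1..N+1}).
                     (\<Prod>j\<in>T. w j (g j)) * (if Q T h then \<Prod>j\<in>I - T. w j (h j) else 0))"
  proof (intro sum.cong refl)
    fix T g h assume T: "T \<in> Pow I" and g: "g \<in> PiE T (\<lambda>_. {1..l})" and h: "h \<in> PiE (I - T) (\<lambda>_. {l+1..N+1})"
    let ?f = "\<lambda>j. if j \<in> T then g j else h j"
    have "g j \<le> l" if "j \<in> T" for j using PiE_mem[OF g that] by simp
    moreover have "l < h j" if "j \<in> I - T" for j using PiE_mem[OF h that] by simp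
    ultimately have low: "{j\<in>I. ?f j \<le> l} = T" and high: "{j\<in>I. l < ?f j} = I - T"
      using T by (auto simp: not_le[symmetric])
    have "restrict ?f (I - T) = h"
      using h by (auto simp: PiE_iff extensional_def fun_eq_iff)
    moreover have "?W ?f = (\<Prod>j\<in>T. w j (g j)) * (\<Prod>j\<in>I - T. w j (h j))"
      using T I by (simp add: prod.subset_diff[of T I] finite_subset)
    ultimately show "?F ?f = (\<Prod>j\<in>T. w j (g j)) * (if Q T h then \<Prod>j\<in>I - T. w j (h j) else 0)"
      unfolding low high by simp
  qed
  also have "\<dots> = (\<Sum>T\<in>Pow I. ?low T * ?high T)"
  proof (intro sum.cong refl)
    fix T assume "T \<in> Pow I"
    then have fin: "finite T" "finite (I - T)" using I finite_subset by auto
    show "(\<Sum>g\<in>PiE T (\<lambda>_. {1..l}). \<Sum>h\<in>PiE (I - T) (\<lambda>_. {l+1..N+1}).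
             (\<Prod>j\<in>T. w j (g j)) * (if Q T h then \<Prod>j\<in>I - T. w j (h j) else 0)) = ?low T * ?high T"
      using fin by (simp add: prod_sum_PiE sum_product sum.inter_filter finite_PiE)
  qed
  finally show ?thesis .
qed

lemma sum_low_count_eq:
  fixes w :: "'a \<Rightarrow> nat \<Rightarrow> real"
  assumes I: "finite I" and lN: "l \<le> N"
  shows "(\<Sum>f\<in>{f\<in>PiE I (\<lambda>_. {1..N+1}). card {j\<in>I. f j \<le> l} = k}. \<Prod>j\<in>I. w j (f j))
       = (\<Sum>T\<in>{T. T \<subseteq> I \<and> card T = k}. (\<Prod>j\<in>T. \<Sum>i\<in>{1..l}. w j i) * (\<Prod>j\<in>I - T. \<Sum>i\<in>{l+1..N+1}. w j i))"
proof -
  have "(\<Sum>f\<in>{f\<in>PiE I (\<lambda>_. {1..N+1}). card {j\<in>I. f j \<le> l} = k}. \<Prod>j\<in>I. w j (f j))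
      = (\<Sum>T\<in>Pow I. (\<Prod>j\<in>T. \<Sum>i\<in>{1..l}. w j i)
            * (\<Sum>h\<in>{h\<in>PiE (I - T) (\<lambda>_. {l+1..N+1}). card T = k}. \<Prod>j\<in>I - T. w j (h j)))"
    using sum_PiE_group_low_set[OF I lN, where Q = "\<lambda>T h. card T = k"] by simp
  also have "\<dots> = (\<Sum>T\<in>Pow I. if card T = k then (\<Prod>j\<in>T. \<Sum>i\<in>{1..l}. w j i) * (\<Prod>j\<in>I - T. \<Sum>i\<in>{l+1..N+1}. w j i) else 0)"
  proof (intro sum.cong refl)
    fix T assume "T \<in> Pow I"
    then have "finite (I - T)" using I by auto
    from prod_sum_PiE[OF this, of "\<lambda>_. {l+1..N+1}" w]
    show "(\<Prod>j\<in>T. \<Sum>i\<in>{1..l}. w j i) * (\<Sum>h\<in>{h\<in>PiE (I - T) (\<lambda>_. {l+1..N+1}). card T = k}. \<Prod>j\<in>I - T. w j (h j))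
        = (if card T = k then (\<Prod>j\<in>T. \<Sum>i\<in>{1..l}. w j i) * (\<Prod>j\<in>I - T. \<Sum>i\<in>{l+1..N+1}. w j i) else 0)"
      by simp
  qed
  also have "\<dots> = (\<Sum>T\<in>{T. T \<subseteq> I \<and> card T = k}. (\<Prod>j\<in>T. \<Sum>i\<in>{1..l}. w j i) * (\<Prod>j\<in>I - T. \<Sum>i\<in>{l+1..N+1}. w j i))"
    using I by (simp add: sum.inter_filter[symmetric] Pow_def conj_commute)
  finally show ?thesis .
qed

(* For d = 0 the condition on the left characterises k~ = l, for d = c = l it characterises
   k~_{+c} = c (see Max_occupancy_eq_iff). *)
lemma sum_touch_then_subdiagonal:
  fixes w :: "'a \<Rightarrow> nat \<Rightarrow> real"
  assumes I: "finite I" and lN: "l \<le> N"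
    and w: "\<And>j i. j \<in> I \<Longrightarrow> l < i \<Longrightarrow> i \<le> N + 1 \<Longrightarrow> w j i = (if i \<le> N then a j else b j)"
  shows "(\<Sum>f\<in>{f\<in>PiE I (\<lambda>_. {1..N+1}). card {j\<in>I. f j \<le> l} + d = l
                    \<and> (\<forall>i\<in>{l<..N}. card {j\<in>I. f j \<le> i} + d < i)}. \<Prod>j\<in>I. w j (f j))
       = (\<Sum>T\<in>{T. T \<subseteq> I \<and> card T + d = l}. (\<Prod>j\<in>T. \<Sum>i\<in>{1..l}. w j i)
            * (\<Sum>g\<in>{g\<in>PiE (I - T) (\<lambda>_. {1..N-l+1}). subdiagonal (N - l) (I - T) g}.
                 \<Prod>j\<in>I - T. if g j \<le> N - l then a j else b j))"
    (is "_ = (\<Sum>T\<in>_. ?low T * ?high T)")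
proof -
  let ?Q = "\<lambda>T h. card T + d = l \<and> (\<forall>i\<in>{l<..N}. card {j\<in>I - T. h j \<le> i} + l < i)"
  have split: "card {j\<in>I. f j \<le> i} = card {j\<in>I. f j \<le> l} + card {j\<in>I - {j\<in>I. f j \<le> l}. restrict f {j\<in>I. l < f j} j \<le> i}"
    if "l < i" for f :: "'a \<Rightarrow> nat" and i
  proof -
    have "{j\<in>I. f j \<le> i} = {j\<in>I. f j \<le> l} \<union> {j\<in>I - {j\<in>I. f j \<le> l}. restrict f {j\<in>I. l < f j} j \<le> i}"
      using that by auto
    then show ?thesis using I by (simp only:) (rule card_Un_disjoint, auto)
  qed
  have "(\<Sum>f\<in>{f\<in>PiE I (\<lambda>_. {1..N+1}). card {j\<in>I. f j \<le> l} + d = l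
                    \<and> (\<forall>i\<in>{l<..N}. card {j\<in>I. f j \<le> i} + d < i)}. \<Prod>j\<in>I. w j (f j))
      = (\<Sum>f\<in>{f\<in>PiE I (\<lambda>_. {1..N+1}). ?Q {j\<in>I. f j \<le> l} (restrict f {j\<in>I. l < f j})}. \<Prod>j\<in>I. w j (f j))"
    by (intro sum.cong refl Collect_cong conj_cong refl) (auto simp: split)
  also have "\<dots> = (\<Sum>T\<in>Pow I. ?low T * (\<Sum>h\<in>{h\<in>PiE (I - T) (\<lambda>_. {l+1..N+1}). ?Q T h}. \<Prod>j\<in>I - T. w j (h j)))"
    by (rule sum_PiE_group_low_set[OF I lN])
  also have "\<dots> = (\<Sum>T\<in>Pow I. if card T + d = l then ?low T * ?high T else 0)"
  proof (intro sum.cong refl)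
    fix T assume "T \<in> Pow I"
    have "(\<Sum>h\<in>{h\<in>PiE (I - T) (\<lambda>_. {l+1..N+1}). \<forall>i\<in>{l<..N}. card {j\<in>I - T. h j \<le> i} + l < i}.
             \<Prod>j\<in>I - T. w j (h j)) = ?high T"
      using w by (intro sum_subdiagonal_shift[OF lN]) auto
    then show "?low T * (\<Sum>h\<in>{h\<in>PiE (I - T) (\<lambda>_. {l+1..N+1}). ?Q T h}. \<Prod>j\<in>I - T. w j (h j))
        = (if card T + d = l then ?low T * ?high T else 0)"
      by (cases "card T + d = l") simp_all
  qed
  also have "\<dots> = (\<Sum>T\<in>{T. T \<subseteq> I \<and> card T + d = l}. ?low T * ?high T)"
    using I by (simp add: sum.inter_filter[symmetric] Pow_def conj_commute)
  finally show ?thesis .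
qed

section \<open>Reduction to the bins of the p-values\<close>

(* Cell 0 collects the points outside [0,1], a null set under the model, so that the
   cells 0..N+1 partition the real line. *)
definition cell :: "nat \<Rightarrow> real \<Rightarrow> nat \<Rightarrow> real set" where
  "cell N q i = (if i = 0 then - {0..1} else bin N q i)"

definition cell_prob :: "nat \<Rightarrow> real \<Rightarrow> nat \<Rightarrow> real" where
  "cell_prob N q i = (if i = 0 then 0 else if i \<le> N then q / real N else 1 - q)"

definition cell_index :: "nat \<Rightarrow> real \<Rightarrow> real \<Rightarrow> nat" where
  "cell_index N q x = (if x \<notin> {0..1} then 0 else if q \<le> x then N + 1 else nat \<lfloor>x * real N / q\<rfloor> + 1)"

lemma mem_bin_iff:
  assumes N: "N \<ge> 1" and q: "0 < q" and i: "1 \<le> i" "i \<le> N"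
  shows "x \<in> bin N q i \<longleftrightarrow> \<lfloor>x * real N / q\<rfloor> = int (i - 1)"
proof -
  have "x \<in> bin N q i \<longleftrightarrow> real (i - 1) \<le> x * real N / q \<and> x * real N / q < real (i - 1) + 1"
    using N q i by (auto simp: bin_def field_simps of_nat_diff)
  then show ?thesis by (simp add: floor_eq_iff)
qed

lemma mem_cell_iff:
  assumes N: "N \<ge> 1" and q: "0 < q" "q < 1" and i: "i \<le> N + 1"
  shows "x \<in> cell N q i \<longleftrightarrow> i = cell_index N q x"
proof -
  have low: "x < q" if "x \<in> bin N q k" "1 \<le> k" "k \<le> N" for k
  proof -
    have "real k * q / real N \<le> q" using that N q by (simp add: field_simps mult_right_mono)
    then show ?thesis using that by (auto simp: bin_def)
  qed
  have unit: "0 \<le> x \<and> x \<le> 1" if "x \<in> bin N q k" "1 \<le> k" "k \<le> N + 1" for k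
  proof (cases "k = N + 1")
    case False
    have "0 \<le> real (k - 1) * q / real N" using q by simp
    moreover have "real (k - 1) * q / real N \<le> x" using that(1) False by (simp add: bin_def)
    ultimately have "0 \<le> x" by linarith
    then show ?thesis using low[of k] that False q by simp
  qed (use that q in \<open>simp add: bin_def\<close>)
  consider "x \<notin> {0..1}" | "x \<in> {0..1}" "q \<le> x" | "0 \<le> x" "x < q" by fastforce
  then show ?thesis
  proof cases
    case 1
    then show ?thesis using unit[of i] i by (auto simp: cell_def cell_index_def)
  next
    case 2
    then show ?thesis using low[of i] i by (auto simp: cell_def cell_index_def bin_def)
  next
    case 3
    have "x * real N / q < real N" using 3 q N by (simp add: field_simps)
    then have fl: "0 \<le> \<lfloor>x * real N / q\<rfloor>" "\<lfloor>x * real N / q\<rfloor> < int N"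
      using 3 q by (auto simp: floor_less_iff)
    show ?thesis
    proof (cases "i = 0 \<or> i = N + 1")
      case True
      moreover have "nat \<lfloor>x * real N / q\<rfloor> < N" using fl by (simp add: nat_less_iff)
      ultimately show ?thesis using 3 q by (auto simp: cell_def cell_index_def bin_def)
    next
      case False
      then show ?thesis
        using 3 q i fl mem_bin_iff[OF N q(1), of i x] by (auto simp: cell_def cell_index_def)
    qed
  qed
qed

lemma cell_index_le:
  assumes "0 < q"
  shows "cell_index N q x \<le> N + 1"
proof -
  have "x * real N / q \<le> real N" if "x < q" using assms that
    by (simp add: field_simps mult_right_mono)
  then show ?thesis unfolding cell_index_def by (auto simp: nat_le_iff floor_le_iff)
qed

lemma load_eq_card_cells:
  assumes N: "N \<ge> 1" and q: "0 < q" "q < 1" and i: "1 \<le> i" "i \<le> N + 1"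
    and g: "\<And>j. j \<in> S \<Longrightarrow> cell_index N q (p j) = g j"
  shows "load S N q p i = card {j\<in>S. g j = i}"
proof -
  have "p j \<in> bin N q i \<longleftrightarrow> g j = i" if "j \<in> S" for j
    using mem_cell_iff[OF N q i(2), of "p j"] i(1) g[OF that] by (auto simp: cell_def)
  then show ?thesis unfolding load_def by (metis (no_types, lifting) Collect_cong)
qed

lemma loadsum_eq_card_cells:
  assumes N: "N \<ge> 1" and q: "0 < q" "q < 1" and S: "finite S"
    and g: "\<And>j. j \<in> S \<Longrightarrow> cell_index N q (p j) = g j"
  shows "i \<le> N + 1 \<Longrightarrow> loadsum S N q p 1 i = card {j\<in>S. g j \<in> {1..i}}"
proof (induction i)
  case 0
  then show ?case by (simp add: loadsum_def)
next
  case (Suc i)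
  have "{j\<in>S. g j \<in> {1..Suc i}} = {j\<in>S. g j \<in> {1..i}} \<union> {j\<in>S. g j = Suc i}" by auto
  then have "card {j\<in>S. g j \<in> {1..Suc i}} = card {j\<in>S. g j \<in> {1..i}} + card {j\<in>S. g j = Suc i}"
    using S by (simp only:) (rule card_Un_disjoint, auto)
  then show ?case
    using Suc load_eq_card_cells[OF N q _ _ g, of "Suc i"] by (simp add: loadsum_def)
qed

lemma ktilde_eq_cells:
  assumes N: "N \<ge> 1" and q: "0 < q" "q < 1"
    and g: "\<And>j. j \<in> {1..N} \<Longrightarrow> cell_index N q (p j) = g j"
  shows "ktilde N q p = Max {i\<in>{0..N}. card {j\<in>{1..N}. g j \<in> {1..i}} = i}"
proof -
  have "loadsum {1..N} N q p 1 i = card {j\<in>{1..N}. g j \<in> {1..i}}" if "i \<le> N" for i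
    by (rule loadsum_eq_card_cells[OF N q, of "{1..N}" p g i]) (use g that in auto)
  then show ?thesis unfolding ktilde_def by (metis (no_types, lifting) atLeastAtMost_iff)
qed

lemma ktilde_plus_eq_cells:
  assumes N: "N \<ge> 1" and q: "0 < q" "q < 1" and H0: "H0 \<subseteq> {1..N}"
    and g: "\<And>j. j \<in> {1..N} \<Longrightarrow> cell_index N q (p j) = g j"
  shows "ktilde_plus H0 c N q p
       = (if c \<le> card {j\<in>H0. g j = N + 1} then Max {i\<in>{c..N}. card {j\<in>{1..N}. g j \<in> {1..i}} = i - c}
          else Max {i\<in>{0..N}. card {j\<in>{1..N}. g j \<in> {1..i}} = i})"
proof -
  have "loadsum {1..N} N q p 1 i = card {j\<in>{1..N}. g j \<in> {1..i}}" if "i \<le> N" for i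
    by (rule loadsum_eq_card_cells[OF N q, of "{1..N}" p g i]) (use g that in auto)
  then have "{i\<in>{c..N}. loadsum {1..N} N q p 1 i = i - c} = {i\<in>{c..N}. card {j\<in>{1..N}. g j \<in> {1..i}} = i - c}"
    by auto
  moreover have "load H0 N q p (N + 1) = card {j\<in>H0. g j = N + 1}"
    using g H0 by (intro load_eq_card_cells[OF N q]) auto
  moreover note ktilde_eq_cells[OF N q g]
  ultimately show ?thesis unfolding ktilde_plus_def by simp
qed

lemma cell_in_borel: "cell N q i \<in> sets borel"
  unfolding cell_def bin_def by (auto intro!: borel_closed)

lemma emeasure_uniform_cell:
  assumes N: "N \<ge> 1" and q: "0 < q" "q < 1" and i: "i \<le> N + 1"
  shows "emeasure (uniform_measure lborel {0..1}) (cell N q i) = ennreal (cell_prob N q i)"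
proof -
  have "emeasure (uniform_measure lborel {0..1}) (cell N q i) = emeasure lborel ({0..1} \<inter> cell N q i)"
    using cell_in_borel[of N q i] by (simp add: divide_ennreal_def)
  also have "\<dots> = ennreal (cell_prob N q i)"
  proof (cases "i = 0 \<or> i = N + 1")
    case True
    moreover have "{0..1} \<inter> cell N q 0 = {}" "{0..1} \<inter> cell N q (N + 1) = {q..1}"
      using q by (auto simp: cell_def bin_def)
    ultimately show ?thesis using q by (auto simp: cell_prob_def)
  next
    case False
    let ?a = "real (i - 1) * q / real N" and ?b = "real i * q / real N"
    have "real i * q \<le> real i" using q by (intro mult_left_le) auto
    also have "\<dots> \<le> real N" using False i by simp
    finally have "?b \<le> 1" using N by simp
    moreover have "0 \<le> ?a" using q by simp
    ultimately have "{0..1} \<inter> cell N q i = {?a..<?b}"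
      using False by (auto simp: cell_def bin_def)
    moreover have "?b - ?a = q / real N"
      using False by (simp add: of_nat_diff diff_divide_distrib[symmetric] algebra_simps)
    ultimately show ?thesis
      using False i q by (simp add: cell_prob_def divide_right_mono)
  qed
  finally show ?thesis .
qed

lemma prob_space_pmodel: "prob_space (pmodel N)"
  unfolding pmodel_def by (intro prob_space_PiM, rule prob_space_uniform_measure) auto

lemma measure_pmodel_box:
  assumes N: "N \<ge> 1" and q: "0 < q" "q < 1" and g: "g \<in> PiE {1..N} (\<lambda>_. {0..N+1})"
  shows "measure (pmodel N) (PiE {1..N} (\<lambda>j. cell N q (g j))) = (\<Prod>j\<in>{1..N}. cell_prob N q (g j))"
proof -
  interpret product_prob_space "\<lambda>_::nat. uniform_measure lborel {0..1::real}"
    by (intro product_prob_spaceI prob_space_uniform_measure) auto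
  have nonneg: "0 \<le> cell_prob N q i" for i using q by (simp add: cell_prob_def)
  have "emeasure (pmodel N) (PiE {1..N} (\<lambda>j. cell N q (g j)))
      = (\<Prod>j\<in>{1..N}. emeasure (uniform_measure lborel {0..1}) (cell N q (g j)))"
    unfolding pmodel_def by (rule emeasure_PiM) (auto simp: cell_in_borel)
  also have "\<dots> = ennreal (\<Prod>j\<in>{1..N}. cell_prob N q (g j))"
    using g nonneg by (simp add: emeasure_uniform_cell[OF N q] PiE_iff prod_ennreal)
  finally show ?thesis using nonneg by (simp add: measure_def prod_nonneg)
qed

lemma mem_cell_box_iff:
  assumes N: "N \<ge> 1" and q: "0 < q" "q < 1" and g: "g \<in> PiE {1..N} (\<lambda>_. {0..N+1})"
  shows "p \<in> PiE {1..N} (\<lambda>j. cell N q (g j))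
     \<longleftrightarrow> p \<in> space (pmodel N) \<and> (\<lambda>j\<in>{1..N}. cell_index N q (p j)) = g"
  using g mem_cell_iff[OF N q] by (auto simp: pmodel_def space_PiM PiE_iff extensional_def fun_eq_iff)

lemma pmodel_event_eq_Union_boxes:
  assumes N: "N \<ge> 1" and q: "0 < q" "q < 1"
    and P: "\<And>p. p \<in> space (pmodel N) \<Longrightarrow> P p \<longleftrightarrow> \<Phi> (\<lambda>j\<in>{1..N}. cell_index N q (p j))"
  shows "{p\<in>space (pmodel N). P p}
       = (\<Union>g\<in>{g\<in>PiE {1..N} (\<lambda>_. {0..N+1}). \<Phi> g}. PiE {1..N} (\<lambda>j. cell N q (g j)))"
proof (intro set_eqI iffI)
  fix p assume p: "p \<in> {p\<in>space (pmodel N). P p}"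
  then have "(\<lambda>j\<in>{1..N}. cell_index N q (p j)) \<in> PiE {1..N} (\<lambda>_. {0..N+1})"
    using cell_index_le[OF q(1)] by auto
  with p show "p \<in> (\<Union>g\<in>{g\<in>PiE {1..N} (\<lambda>_. {0..N+1}). \<Phi> g}. PiE {1..N} (\<lambda>j. cell N q (g j)))"
    using P mem_cell_box_iff[OF N q] by blast
next
  fix p assume "p \<in> (\<Union>g\<in>{g\<in>PiE {1..N} (\<lambda>_. {0..N+1}). \<Phi> g}. PiE {1..N} (\<lambda>j. cell N q (g j)))"
  then obtain g where "g \<in> PiE {1..N} (\<lambda>_. {0..N+1})" "\<Phi> g" "p \<in> PiE {1..N} (\<lambda>j. cell N q (g j))"
    by blast
  then show "p \<in> {p\<in>space (pmodel N). P p}" using P mem_cell_box_iff[OF N q] by simp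
qed

lemma measure_pmodel_by_cells:
  assumes N: "N \<ge> 1" and q: "0 < q" "q < 1"
    and P: "\<And>p g. p \<in> space (pmodel N) \<Longrightarrow> (\<And>j. j \<in> {1..N} \<Longrightarrow> cell_index N q (p j) = g j)
              \<Longrightarrow> P p \<longleftrightarrow> \<Phi> g"
  shows "measure (pmodel N) {p\<in>space (pmodel N). P p}
       = (\<Sum>g\<in>{g\<in>PiE {1..N} (\<lambda>_. {1..N+1}). \<Phi> g}. \<Prod>j\<in>{1..N}. cell_prob N q (g j))"
proof -
  interpret P: prob_space "pmodel N" by (rule prob_space_pmodel)
  let ?G = "PiE {1..N} (\<lambda>_. {0..N+1})"
  let ?box = "\<lambda>g. PiE {1..N} (\<lambda>j. cell N q (g j))"
  have "?box g1 \<inter> ?box g2 = {}" if "g1 \<in> ?G" "g2 \<in> ?G" "g1 \<noteq> g2" for g1 g2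
    using mem_cell_box_iff[OF N q that(1)] mem_cell_box_iff[OF N q that(2)] that(3) by auto
  then have "disjoint_family_on ?box {g\<in>?G. \<Phi> g}"
    by (auto simp: disjoint_family_on_def)
  moreover have "?box ` {g\<in>?G. \<Phi> g} \<subseteq> sets (pmodel N)"
    unfolding pmodel_def by (auto intro!: sets_PiM_I_finite simp: cell_in_borel)
  moreover have "{p\<in>space (pmodel N). P p} = (\<Union>g\<in>{g\<in>?G. \<Phi> g}. ?box g)"
  proof (rule pmodel_event_eq_Union_boxes[OF N q])
    fix p assume "p \<in> space (pmodel N)"
    from P[OF this, of "\<lambda>j\<in>{1..N}. cell_index N q (p j)"]
    show "P p \<longleftrightarrow> \<Phi> (\<lambda>j\<in>{1..N}. cell_index N q (p j))" by simp
  qed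
  ultimately have "measure (pmodel N) {p\<in>space (pmodel N). P p}
      = (\<Sum>g\<in>{g\<in>?G. \<Phi> g}. measure (pmodel N) (?box g))"
    by (simp add: P.finite_measure_finite_Union finite_PiE)
  also have "\<dots> = (\<Sum>g\<in>{g\<in>?G. \<Phi> g}. \<Prod>j\<in>{1..N}. cell_prob N q (g j))"
    by (intro sum.cong refl measure_pmodel_box[OF N q]) auto
  also have "\<dots> = (\<Sum>g\<in>{g\<in>PiE {1..N} (\<lambda>_. {1..N+1}). \<Phi> g}. \<Prod>j\<in>{1..N}. cell_prob N q (g j))"
  proof (rule sum.mono_neutral_right)
    show "{g\<in>PiE {1..N} (\<lambda>_. {1..N+1}). \<Phi> g} \<subseteq> {g\<in>?G. \<Phi> g}" by (auto simp: PiE_iff)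
    show "\<forall>g\<in>{g\<in>?G. \<Phi> g} - {g\<in>PiE {1..N} (\<lambda>_. {1..N+1}). \<Phi> g}. (\<Prod>j\<in>{1..N}. cell_prob N q (g j)) = 0"
    proof
      fix g assume "g \<in> {g\<in>?G. \<Phi> g} - {g\<in>PiE {1..N} (\<lambda>_. {1..N+1}). \<Phi> g}"
      then obtain j where "j \<in> {1..N}" "g j = 0" by (force simp: PiE_iff)
      then show "(\<Prod>j\<in>{1..N}. cell_prob N q (g j)) = 0"
        by (intro prod_zero) (auto simp: cell_prob_def intro!: bexI[of _ j])
    qed
  qed (simp add: finite_PiE)
  finally show ?thesis .
qed

section \<open>Distribution of the rejection count\<close>

lemma sum_cell_prob_low:
  assumes "l \<le> N"
  shows "(\<Sum>i\<in>{1..l}. cell_prob N q i) = real l * q / real N"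
  using assms by (simp add: cell_prob_def)

lemma sum_cell_prob_high:
  assumes "N \<ge> 1" "l \<le> N"
  shows "(\<Sum>i\<in>{l+1..N+1}. cell_prob N q i) = 1 - real l * q / real N"
proof -
  have "(\<Sum>i\<in>{l+1..N+1}. cell_prob N q i) = (\<Sum>i\<in>{l+1..N}. q / real N) + (1 - q)"
    using assms by (simp add: cell_prob_def)
  then show ?thesis using assms by (simp add: of_nat_diff field_simps)
qed

lemma Max_occupancy_eq_iff:
  assumes g: "g \<in> PiE {1..N} (\<lambda>_. {1..N+1})" and l: "d \<le> l" "l \<le> N"
    and room: "card {j\<in>{1..N}. g j \<le> N} + d \<le> N"
  shows "Max {i\<in>{d..N}. card {j\<in>{1..N}. g j \<in> {1..i}} + d = i} = l
     \<longleftrightarrow> card {j\<in>{1..N}. g j \<le> l} + d = l \<and> (\<forall>i\<in>{l<..N}. card {j\<in>{1..N}. g j \<le> i} + d < i)"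
proof -
  have "{j\<in>{1..N}. g j \<in> {1..i}} = {j\<in>{1..N}. g j \<le> i}" for i using g by (auto simp: PiE_iff)
  moreover have "mono (\<lambda>i. card {j\<in>{1..N}. g j \<le> i} + d)"
    by (intro monoI add_right_mono card_mono) auto
  ultimately show ?thesis
    using Max_fixpoints_eq_iff[of "\<lambda>i. card {j\<in>{1..N}. g j \<le> i} + d" d N l] room l by simp
qed

lemma power_minus_pred_eq:
  fixes x :: "'a :: field"
  assumes "x \<noteq> 0"
  shows "x ^ n - of_nat n * x ^ (n - 1) * c = (x - of_nat n * c) / x * x ^ n"
  using assms by (cases n) (simp_all add: field_simps)

lemma measure_loadsum_eq:
  assumes N: "N \<ge> 1" and q: "0 < q" "q < 1" and lN: "l \<le> N"
  shows "measure (pmodel N) {p\<in>space (pmodel N). loadsum {1..N} N q p 1 l = l}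
       = real (N choose l) * (q * real l / real N) ^ l * (1 - q * real l / real N) ^ (N - l)"
proof -
  let ?I = "{1..N}"
  let ?F = "PiE ?I (\<lambda>_. {1..N+1})"
  have "measure (pmodel N) {p\<in>space (pmodel N). loadsum ?I N q p 1 l = l}
      = (\<Sum>g\<in>{g\<in>?F. card {j\<in>?I. g j \<in> {1..l}} = l}. \<Prod>j\<in>?I. cell_prob N q (g j))"
  proof (rule measure_pmodel_by_cells[OF N q])
    fix p g assume g: "\<And>j. j \<in> ?I \<Longrightarrow> cell_index N q (p j) = g j"
    have "loadsum ?I N q p 1 l = card {j\<in>?I. g j \<in> {1..l}}"
      by (rule loadsum_eq_card_cells[OF N q, of ?I p g l]) (use g lN in auto)
    then show "loadsum ?I N q p 1 l = l \<longleftrightarrow> card {j\<in>?I. g j \<in> {1..l}} = l" by simp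
  qed
  also have "\<dots> = (\<Sum>g\<in>{g\<in>?F. card {j\<in>?I. g j \<le> l} = l}. \<Prod>j\<in>?I. cell_prob N q (g j))"
  proof (intro sum.cong refl Collect_cong conj_cong)
    fix g assume "g \<in> ?F"
    then have "{j\<in>?I. g j \<in> {1..l}} = {j\<in>?I. g j \<le> l}" by (auto simp: PiE_iff)
    then show "card {j\<in>?I. g j \<in> {1..l}} = l \<longleftrightarrow> card {j\<in>?I. g j \<le> l} = l" by simp
  qed
  also have "\<dots> = (\<Sum>T\<in>{T. T \<subseteq> ?I \<and> card T = l}.
                     (\<Prod>j\<in>T. \<Sum>i\<in>{1..l}. cell_prob N q i) * (\<Prod>j\<in>?I - T. \<Sum>i\<in>{l+1..N+1}. cell_prob N q i))"
    by (rule sum_low_count_eq) (use lN in auto)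
  also have "\<dots> = (\<Sum>T\<in>{T. T \<subseteq> ?I \<and> card T = l}. (real l * q / real N) ^ l * (1 - real l * q / real N) ^ (N - l))"
  proof (intro sum.cong refl)
    fix T assume "T \<in> {T. T \<subseteq> ?I \<and> card T = l}"
    then have "card T = l" "card (?I - T) = N - l" by (auto simp: card_Diff_subset finite_subset)
    with sum_cell_prob_low[OF lN, of q] sum_cell_prob_high[OF N lN, of q]
    show "(\<Prod>j\<in>T. \<Sum>i\<in>{1..l}. cell_prob N q i) * (\<Prod>j\<in>?I - T. \<Sum>i\<in>{l+1..N+1}. cell_prob N q i)
        = (real l * q / real N) ^ l * (1 - real l * q / real N) ^ (N - l)" by simp
  qed
  finally show ?thesis by (simp add: n_subsets mult.commute)
qed

lemma sum_cells_ktilde_eq: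
  fixes q :: real
  assumes N: "N \<ge> 1" and lN: "l \<le> N"
  defines "s \<equiv> 1 - real l * q / real N"
  shows "(\<Sum>g\<in>{g\<in>PiE {1..N} (\<lambda>_. {1..N+1}). card {j\<in>{1..N}. g j \<le> l} + 0 = l
              \<and> (\<forall>i\<in>{l<..N}. card {j\<in>{1..N}. g j \<le> i} + 0 < i)}. \<Prod>j\<in>{1..N}. cell_prob N q (g j))
       = real (N choose l) * (real l * q / real N) ^ l
         * (s ^ (N - l) - real (N - l) * s ^ (N - l - 1) * (q / real N))"
proof -
  let ?I = "{1..N}"
  have s: "real (N - l) * (q / real N) + (1 - q) = s"
    using N lN by (simp add: s_def of_nat_diff field_simps)
  have "(\<Sum>g\<in>{g\<in>PiE ?I (\<lambda>_. {1..N+1}). card {j\<in>?I. g j \<le> l} + 0 = l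
              \<and> (\<forall>i\<in>{l<..N}. card {j\<in>?I. g j \<le> i} + 0 < i)}. \<Prod>j\<in>?I. cell_prob N q (g j))
      = (\<Sum>T\<in>{T. T \<subseteq> ?I \<and> card T + 0 = l}. (\<Prod>j\<in>T. \<Sum>i\<in>{1..l}. cell_prob N q i)
            * (\<Sum>g\<in>{g\<in>PiE (?I - T) (\<lambda>_. {1..N-l+1}). subdiagonal (N - l) (?I - T) g}.
                 \<Prod>j\<in>?I - T. if g j \<le> N - l then q / real N else 1 - q))"
    by (rule sum_touch_then_subdiagonal) (use lN in \<open>auto simp: cell_prob_def\<close>)
  also have "\<dots> = (\<Sum>T\<in>{T. T \<subseteq> ?I \<and> card T + 0 = l}. (real l * q / real N) ^ l
                     * (s ^ (N - l) - real (N - l) * s ^ (N - l - 1) * (q / real N)))"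
  proof (intro sum.cong refl)
    fix T assume "T \<in> {T. T \<subseteq> ?I \<and> card T + 0 = l}"
    then have "card T = l" "card (?I - T) = N - l" by (auto simp: card_Diff_subset finite_subset)
    with sum_subdiagonal_const[of "?I - T" "N - l" "q / real N" "1 - q", unfolded s] sum_cell_prob_low[OF lN, of q]
    show "(\<Prod>j\<in>T. \<Sum>i\<in>{1..l}. cell_prob N q i)
            * (\<Sum>g\<in>{g\<in>PiE (?I - T) (\<lambda>_. {1..N-l+1}). subdiagonal (N - l) (?I - T) g}.
                 \<Prod>j\<in>?I - T. if g j \<le> N - l then q / real N else 1 - q)
        = (real l * q / real N) ^ l * (s ^ (N - l) - real (N - l) * s ^ (N - l - 1) * (q / real N))"
      by simp
  qed
  finally show ?thesis by (simp add: n_subsets)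
qed

lemma measure_ktilde_eq:
  assumes N: "N \<ge> 1" and q: "0 < q" "q < 1" and lN: "l \<le> N"
  shows "measure (pmodel N) {p\<in>space (pmodel N). ktilde N q p = l}
       = (1 - q) / (1 - q * real l / real N)
         * (real (N choose l) * (q * real l / real N) ^ l * (1 - q * real l / real N) ^ (N - l))"
proof -
  let ?I = "{1..N}"
  let ?F = "PiE ?I (\<lambda>_. {1..N+1})"
  let ?s = "1 - real l * q / real N"
  have "measure (pmodel N) {p\<in>space (pmodel N). ktilde N q p = l}
      = (\<Sum>g\<in>{g\<in>?F. Max {i\<in>{0..N}. card {j\<in>?I. g j \<in> {1..i}} + 0 = i} = l}. \<Prod>j\<in>?I. cell_prob N q (g j))"
  proof (rule measure_pmodel_by_cells[OF N q])
    fix p g assume "\<And>j. j \<in> ?I \<Longrightarrow> cell_index N q (p j) = g j"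
    from ktilde_eq_cells[OF N q this]
    show "ktilde N q p = l \<longleftrightarrow> Max {i\<in>{0..N}. card {j\<in>?I. g j \<in> {1..i}} + 0 = i} = l" by simp
  qed
  also have "\<dots> = (\<Sum>g\<in>{g\<in>?F. card {j\<in>?I. g j \<le> l} + 0 = l
                        \<and> (\<forall>i\<in>{l<..N}. card {j\<in>?I. g j \<le> i} + 0 < i)}. \<Prod>j\<in>?I. cell_prob N q (g j))"
  proof (intro sum.cong refl Collect_cong conj_cong[OF refl])
    fix g assume "g \<in> ?F"
    moreover have "card {j\<in>?I. g j \<le> N} \<le> card ?I" by (intro card_mono) auto
    ultimately show "Max {i\<in>{0..N}. card {j\<in>?I. g j \<in> {1..i}} + 0 = i} = l
        \<longleftrightarrow> card {j\<in>?I. g j \<le> l} + 0 = l \<and> (\<forall>i\<in>{l<..N}. card {j\<in>?I. g j \<le> i} + 0 < i)"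
      using lN by (intro Max_occupancy_eq_iff) auto
  qed
  also have "\<dots> = real (N choose l) * (real l * q / real N) ^ l
                   * (?s ^ (N - l) - real (N - l) * ?s ^ (N - l - 1) * (q / real N))"
    by (rule sum_cells_ktilde_eq[OF N lN])
  also have "?s ^ (N - l) - real (N - l) * ?s ^ (N - l - 1) * (q / real N) = (1 - q) / ?s * ?s ^ (N - l)"
  proof -
    have "q * real l \<le> q * real N" using lN q by (intro mult_left_mono) auto
    also have "\<dots> < real N" using q N by simp
    finally have "?s \<noteq> 0" using N by (simp add: field_simps)
    then have "?s ^ (N - l) - real (N - l) * ?s ^ (N - l - 1) * (q / real N)
        = (?s - real (N - l) * (q / real N)) / ?s * ?s ^ (N - l)"
      by (rule power_minus_pred_eq)
    also have "?s - real (N - l) * (q / real N) = 1 - q" using N lN by (simp add: of_nat_diff field_simps)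
    finally show ?thesis .
  qed
  finally show ?thesis by (simp add: mult.commute mult.left_commute)
qed

section \<open>Conditional law of the augmented rejection count\<close>

(* The cell weights of p_j restricted to the event that M is exactly the set of null
   indices whose p-value lies in the top bin. *)
definition cell_prob_top_set :: "nat \<Rightarrow> real \<Rightarrow> nat set \<Rightarrow> nat set \<Rightarrow> nat \<Rightarrow> nat \<Rightarrow> real" where
  "cell_prob_top_set N q H0 M j i = (if j \<in> H0 \<and> (i = N + 1 \<longleftrightarrow> j \<notin> M) then 0 else cell_prob N q i)"

lemma prod_cell_prob_top_set:
  assumes I: "finite I" and H0: "H0 \<subseteq> I" and M: "M \<subseteq> H0"
  shows "(\<Prod>j\<in>I. cell_prob_top_set N q H0 M j (g j))
       = (if {j\<in>H0. g j = N + 1} = M then \<Prod>j\<in>I. cell_prob N q (g j) else 0)"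
proof (cases "{j\<in>H0. g j = N + 1} = M")
  case True
  then show ?thesis by (auto simp: cell_prob_top_set_def intro!: prod.cong)
next
  case False
  then obtain j where "(j \<in> H0 \<and> g j = N + 1) \<noteq> (j \<in> M)" by (auto simp: set_eq_iff)
  with M have j: "j \<in> H0" "g j = N + 1 \<longleftrightarrow> j \<notin> M" by auto
  then have "cell_prob_top_set N q H0 M j (g j) = 0" by (simp add: cell_prob_top_set_def)
  moreover have "j \<in> I" using j H0 by auto
  ultimately have "(\<Prod>j\<in>I. cell_prob_top_set N q H0 M j (g j)) = 0" by (intro prod_zero[OF I]) auto
  then show ?thesis using False by simp
qed

lemma sum_group_top_set:
  assumes I: "finite I" and H0: "H0 \<subseteq> I"
  shows "(\<Sum>g\<in>{g\<in>PiE I (\<lambda>_. {1..N+1}). card {j\<in>H0. g j = N + 1} = m \<and> P g}. \<Prod>j\<in>I. cell_prob N q (g j))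
       = (\<Sum>M\<in>{M. M \<subseteq> H0 \<and> card M = m}. \<Sum>g\<in>{g\<in>PiE I (\<lambda>_. {1..N+1}). P g}.
            \<Prod>j\<in>I. cell_prob_top_set N q H0 M j (g j))"
proof -
  let ?G = "{g\<in>PiE I (\<lambda>_. {1..N+1}). P g}"
  let ?Ms = "{M. M \<subseteq> H0 \<and> card M = m}"
  have "finite ?G" by (rule finite_subset[OF _ finite_PiE[OF I, of "\<lambda>_. {1..N+1}"]]) auto
  moreover have "finite ?Ms" by (rule finite_subset[of _ "Pow H0"]) (use finite_subset[OF H0 I] in auto)
  ultimately have fin: "finite ?G" "finite ?Ms" .
  have "(\<Sum>M\<in>?Ms. \<Sum>g\<in>?G. \<Prod>j\<in>I. cell_prob_top_set N q H0 M j (g j))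
      = (\<Sum>g\<in>?G. \<Sum>M\<in>?Ms. if {j\<in>H0. g j = N + 1} = M then \<Prod>j\<in>I. cell_prob N q (g j) else 0)"
    by (subst sum.swap) (auto simp: prod_cell_prob_top_set[OF I H0] intro!: sum.cong)
  also have "\<dots> = (\<Sum>g\<in>?G. if card {j\<in>H0. g j = N + 1} = m then \<Prod>j\<in>I. cell_prob N q (g j) else 0)"
    using fin by (intro sum.cong refl) (auto simp: sum.delta)
  also have "\<dots> = (\<Sum>g\<in>{g\<in>PiE I (\<lambda>_. {1..N+1}). card {j\<in>H0. g j = N + 1} = m \<and> P g}. \<Prod>j\<in>I. cell_prob N q (g j))"
    using fin by (simp add: sum.inter_filter[symmetric] conj_ac)
  finally show ?thesis by simp
qed

lemma prod_nested_classes: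
  assumes I: "finite I" and sub: "M \<subseteq> H0" "H0 \<subseteq> I"
  shows "(\<Prod>j\<in>I. if j \<in> M then x else if j \<in> H0 then y else z)
       = x ^ card M * y ^ (card H0 - card M) * z ^ (card I - card H0)"
proof -
  let ?f = "\<lambda>j. if j \<in> M then x else if j \<in> H0 then y else z"
  have H0: "finite H0" using finite_subset[OF sub(2) I] .
  have "(\<Prod>j\<in>I. ?f j) = (\<Prod>j\<in>I - H0. ?f j) * ((\<Prod>j\<in>H0 - M. ?f j) * (\<Prod>j\<in>M. ?f j))"
    by (simp only: prod.subset_diff[OF sub(2) I] prod.subset_diff[OF sub(1) H0])
  also have "\<dots> = (\<Prod>j\<in>I - H0. z) * ((\<Prod>j\<in>H0 - M. y) * (\<Prod>j\<in>M. x))"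
    using sub by (intro arg_cong2[where f = "(*)"] prod.cong) auto
  finally show ?thesis using sub H0 I by (simp add: card_Diff_subset finite_subset mult_ac)
qed

lemma measure_load_top_eq:
  assumes N: "N \<ge> 1" and q: "0 < q" "q < 1" and H0: "H0 \<subseteq> {1..N}"
  shows "measure (pmodel N) {p\<in>space (pmodel N). load H0 N q p (N + 1) = m}
       = real (card H0 choose m) * ((1 - q) ^ m * q ^ (card H0 - m))"
proof -
  let ?I = "{1..N}"
  let ?F = "PiE ?I (\<lambda>_. {1..N+1})"
  have "measure (pmodel N) {p\<in>space (pmodel N). load H0 N q p (N + 1) = m}
      = (\<Sum>g\<in>{g\<in>?F. card {j\<in>H0. g j = N + 1} = m \<and> True}. \<Prod>j\<in>?I. cell_prob N q (g j))"
  proof (rule measure_pmodel_by_cells[OF N q])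
    fix p g assume "\<And>j. j \<in> ?I \<Longrightarrow> cell_index N q (p j) = g j"
    then have "load H0 N q p (N + 1) = card {j\<in>H0. g j = N + 1}"
      using H0 by (intro load_eq_card_cells[OF N q]) auto
    then show "load H0 N q p (N + 1) = m \<longleftrightarrow> card {j\<in>H0. g j = N + 1} = m \<and> True" by simp
  qed
  also have "\<dots> = (\<Sum>M\<in>{M. M \<subseteq> H0 \<and> card M = m}. \<Sum>g\<in>{g\<in>?F. True}. \<Prod>j\<in>?I. cell_prob_top_set N q H0 M j (g j))"
    using H0 by (intro sum_group_top_set) auto
  also have "\<dots> = (\<Sum>M\<in>{M. M \<subseteq> H0 \<and> card M = m}. (1 - q) ^ m * q ^ (card H0 - m))"
  proof (intro sum.cong refl)
    fix M assume M: "M \<in> {M. M \<subseteq> H0 \<and> card M = m}"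
    have "(\<Sum>i\<in>{1..N+1}. cell_prob_top_set N q H0 M j i) = (if j \<in> M then 1 - q else if j \<in> H0 then q else 1)" for j
      using sum_cell_prob_high[OF N, of 0 q] M by (auto simp: cell_prob_top_set_def cell_prob_def)
    then have "(\<Sum>g\<in>{g\<in>?F. True}. \<Prod>j\<in>?I. cell_prob_top_set N q H0 M j (g j))
        = (\<Prod>j\<in>?I. if j \<in> M then 1 - q else if j \<in> H0 then q else 1)"
      by (simp add: prod_sum_PiE[symmetric])
    also have "\<dots> = (1 - q) ^ m * q ^ (card H0 - m)"
      using M H0 by (simp add: prod_nested_classes)
    finally show "(\<Sum>g\<in>{g\<in>?F. True}. \<Prod>j\<in>?I. cell_prob_top_set N q H0 M j (g j)) = (1 - q) ^ m * q ^ (card H0 - m)" .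
  qed
  finally show ?thesis using H0 by (simp add: n_subsets finite_subset)
qed

lemma sum_subdiagonal_nested_classes:
  fixes \<alpha> \<gamma> :: real
  assumes I: "finite I" and sub: "M \<subseteq> H0" "H0 \<subseteq> I" and n: "card I - card M \<le> n"
  defines "u \<equiv> card H0 - card M" and "v \<equiv> card I - card H0"
  shows "(\<Sum>g\<in>{g\<in>PiE I (\<lambda>_. {1..n+1}). subdiagonal n I g}.
            \<Prod>j\<in>I. if g j \<le> n then (if j \<in> M then 0 else \<alpha>) else (if j \<in> H0 - M then 0 else \<gamma>))
       = \<gamma> ^ card M * ((real n * \<alpha>) ^ u * (real n * \<alpha> + \<gamma>) ^ v
           - (real u * (real n * \<alpha>) ^ (u - 1) * (real n * \<alpha> + \<gamma>) ^ v
              + real v * (real n * \<alpha>) ^ u * (real n * \<alpha> + \<gamma>) ^ (v - 1)) * \<alpha>)"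
    (is "?sum = \<gamma> ^ card M * (?F - ?F' * \<alpha>)")
proof -
  let ?a = "\<lambda>j. if j \<in> M then 0 else \<alpha>" and ?b = "\<lambda>j. if j \<in> H0 - M then 0 else \<gamma>"
  have "x * ?a j + ?b j = (if j \<in> M then \<gamma> else if j \<in> H0 then x * \<alpha> else x * \<alpha> + \<gamma>)" for x j
    by simp
  then have F: "(\<lambda>x. \<Prod>j\<in>I. x * ?a j + ?b j) = (\<lambda>x. \<gamma> ^ card M * (x * \<alpha>) ^ u * (x * \<alpha> + \<gamma>) ^ v)"
    using I sub by (intro ext) (simp add: prod_nested_classes u_def v_def)
  have "((\<lambda>x. \<gamma> ^ card M * (x * \<alpha>) ^ u * (x * \<alpha> + \<gamma>) ^ v) has_real_derivative \<gamma> ^ card M * ?F' * \<alpha>) (at (real n))"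
    by (auto intro!: derivative_eq_intros simp: distrib_left distrib_right mult_ac)
  then have D: "((\<lambda>x. \<Prod>j\<in>I. x * ?a j + ?b j) has_real_derivative \<gamma> ^ card M * ?F' * \<alpha>) (at (real n))"
    unfolding F .
  have "card {j\<in>I. ?a j \<noteq> 0} \<le> card (I - M)" using I by (intro card_mono) auto
  also have "\<dots> \<le> n" using n I sub by (simp add: card_Diff_subset finite_subset)
  finally have "?sum = (\<Prod>j\<in>I. real n * ?a j + ?b j) - \<gamma> ^ card M * ?F' * \<alpha>"
    by (rule sum_subdiagonal[OF I _ D])
  also have "(\<Prod>j\<in>I. real n * ?a j + ?b j) = \<gamma> ^ card M * ?F"
    using fun_cong[OF F, of "real n"] by simp
  finally show ?thesis by (simp add: right_diff_distrib mult.assoc)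
qed

lemma sum_ktilde_plus_top_set:
  assumes N: "N \<ge> 1" and q: "0 < q" "q < 1" and H0: "H0 \<subseteq> {1..N}"
    and M: "M \<subseteq> H0" "card M = m" and cm: "c \<le> m"
  defines "A \<equiv> real (N - c) * q / real N" and "B \<equiv> 1 - real c * q / real N"
  shows "(\<Sum>g\<in>{g\<in>PiE {1..N} (\<lambda>_. {1..N+1}). card {j\<in>{1..N}. g j \<le> c} + c = c
              \<and> (\<forall>i\<in>{c<..N}. card {j\<in>{1..N}. g j \<le> i} + c < i)}. \<Prod>j\<in>{1..N}. cell_prob_top_set N q H0 M j (g j))
       = (1 - q) ^ m * (A ^ (card H0 - m) * B ^ (N - card H0)
            - q / real N * (real (card H0 - m) * A ^ (card H0 - m - 1) * B ^ (N - card H0)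
                            + real (N - card H0) * A ^ (card H0 - m) * B ^ (N - card H0 - 1)))"
proof -
  let ?I = "{1..N}"
  let ?a = "\<lambda>j. if j \<in> M then 0 else q / real N"
  let ?b = "\<lambda>j. if j \<in> H0 - M then 0 else 1 - q"
  have "card M \<le> card H0" "card H0 \<le> N"
    using card_mono[OF finite_subset[OF H0] M(1)] card_mono[OF _ H0] by auto
  with M cm have cN: "c \<le> N" by simp
  have w: "cell_prob_top_set N q H0 M j i = (if i \<le> N then ?a j else ?b j)"
    if "j \<in> ?I" "c < i" "i \<le> N + 1" for j i
    using that M by (auto simp: cell_prob_top_set_def cell_prob_def)
  \<comment> \<open>no p-value may lie in the first c bins\<close>
  have "{T. T \<subseteq> ?I \<and> card T + c = c} = {{}}" using finite_subset by fastforce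
  then have "(\<Sum>g\<in>{g\<in>PiE ?I (\<lambda>_. {1..N+1}). card {j\<in>?I. g j \<le> c} + c = c
              \<and> (\<forall>i\<in>{c<..N}. card {j\<in>?I. g j \<le> i} + c < i)}. \<Prod>j\<in>?I. cell_prob_top_set N q H0 M j (g j))
      = (\<Sum>g\<in>{g\<in>PiE ?I (\<lambda>_. {1..N-c+1}). subdiagonal (N - c) ?I g}. \<Prod>j\<in>?I. if g j \<le> N - c then ?a j else ?b j)"
    using sum_touch_then_subdiagonal[where I = ?I and w = "cell_prob_top_set N q H0 M" and d = c, OF _ cN w]
    by simp
  also have "\<dots> = (1 - q) ^ m * (A ^ (card H0 - m) * B ^ (N - card H0)
            - q / real N * (real (card H0 - m) * A ^ (card H0 - m - 1) * B ^ (N - card H0)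
                            + real (N - card H0) * A ^ (card H0 - m) * B ^ (N - card H0 - 1)))"
  proof -
    have "real (N - c) * (q / real N) = A" "real (N - c) * (q / real N) + (1 - q) = B"
      using N cN by (simp_all add: A_def B_def of_nat_diff field_simps)
    moreover have "card ?I - card M \<le> N - c" using M cm by simp
    ultimately show ?thesis
      using sum_subdiagonal_nested_classes[OF finite_atLeastAtMost M(1) H0, of "N - c" "q / real N" "1 - q"] M
      by (simp add: right_diff_distrib distrib_left mult_ac)
  qed
  finally show ?thesis .
qed

lemma measure_ktilde_plus_load_top_eq:
  assumes N: "N \<ge> 1" and q: "0 < q" "q < 1" and H0: "H0 \<subseteq> {1..N}" and cm: "c \<le> m"
  defines "A \<equiv> real (N - c) * q / real N" and "B \<equiv> 1 - real c * q / real N"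
  shows "measure (pmodel N) {p\<in>space (pmodel N). ktilde_plus H0 c N q p = c \<and> load H0 N q p (N + 1) = m}
       = real (card H0 choose m) * ((1 - q) ^ m * (A ^ (card H0 - m) * B ^ (N - card H0)
            - q / real N * (real (card H0 - m) * A ^ (card H0 - m - 1) * B ^ (N - card H0)
                            + real (N - card H0) * A ^ (card H0 - m) * B ^ (N - card H0 - 1))))"
proof -
  let ?I = "{1..N}"
  let ?F = "PiE ?I (\<lambda>_. {1..N+1})"
  let ?top = "\<lambda>g. card {j\<in>H0. g j = N + 1}"
  let ?kplus = "\<lambda>g. if c \<le> ?top g then Max {i\<in>{c..N}. card {j\<in>?I. g j \<in> {1..i}} = i - c}
                    else Max {i\<in>{0..N}. card {j\<in>?I. g j \<in> {1..i}} = i}"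
  let ?stay = "\<lambda>g. card {j\<in>?I. g j \<le> c} + c = c \<and> (\<forall>i\<in>{c<..N}. card {j\<in>?I. g j \<le> i} + c < i)"
  have "measure (pmodel N) {p\<in>space (pmodel N). ktilde_plus H0 c N q p = c \<and> load H0 N q p (N + 1) = m}
      = (\<Sum>g\<in>{g\<in>?F. ?kplus g = c \<and> ?top g = m}. \<Prod>j\<in>?I. cell_prob N q (g j))"
  proof (rule measure_pmodel_by_cells[OF N q])
    fix p g assume g: "\<And>j. j \<in> ?I \<Longrightarrow> cell_index N q (p j) = g j"
    moreover have "load H0 N q p (N + 1) = ?top g"
      using g H0 by (intro load_eq_card_cells[OF N q]) auto
    ultimately show "ktilde_plus H0 c N q p = c \<and> load H0 N q p (N + 1) = m \<longleftrightarrow> ?kplus g = c \<and> ?top g = m"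
      using ktilde_plus_eq_cells[OF N q H0] by simp
  qed
  also have "\<dots> = (\<Sum>g\<in>{g\<in>?F. ?top g = m \<and> ?stay g}. \<Prod>j\<in>?I. cell_prob N q (g j))"
  proof (intro sum.cong refl Collect_cong conj_cong[OF refl])
    fix g assume g: "g \<in> ?F"
    show "?kplus g = c \<and> ?top g = m \<longleftrightarrow> ?top g = m \<and> ?stay g"
    proof (cases "?top g = m")
      case True
      have "card {j\<in>?I. g j \<le> N} \<le> card (?I - {j\<in>H0. g j = N + 1})" by (intro card_mono) auto
      also have "\<dots> = N - ?top g" using H0 by (subst card_Diff_subset) (auto simp: finite_subset)
      finally have "card {j\<in>?I. g j \<le> N} \<le> N - ?top g" .
      moreover have "?top g \<le> card ?I" using H0 by (intro card_mono) auto
      ultimately have "card {j\<in>?I. g j \<le> N} + c \<le> N" using True cm by simp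
      moreover have "{i\<in>{c..N}. card {j\<in>?I. g j \<in> {1..i}} = i - c} = {i\<in>{c..N}. card {j\<in>?I. g j \<in> {1..i}} + c = i}"
        by auto
      ultimately show ?thesis using Max_occupancy_eq_iff[OF g, of c c] True cm by simp
    qed simp
  qed
  also have "\<dots> = (\<Sum>M\<in>{M. M \<subseteq> H0 \<and> card M = m}. \<Sum>g\<in>{g\<in>?F. ?stay g}. \<Prod>j\<in>?I. cell_prob_top_set N q H0 M j (g j))"
    using H0 by (intro sum_group_top_set) auto
  also have "\<dots> = (\<Sum>M\<in>{M. M \<subseteq> H0 \<and> card M = m}. (1 - q) ^ m * (A ^ (card H0 - m) * B ^ (N - card H0)
            - q / real N * (real (card H0 - m) * A ^ (card H0 - m - 1) * B ^ (N - card H0)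
                            + real (N - card H0) * A ^ (card H0 - m) * B ^ (N - card H0 - 1))))"
    using sum_ktilde_plus_top_set[OF N q H0 _ _ cm] unfolding A_def B_def by (intro sum.cong refl) auto
  finally show ?thesis using H0 by (simp add: n_subsets finite_subset)
qed

lemma of_nat_mult_power_pred:
  fixes x :: "'a :: field"
  assumes "x \<noteq> 0 \<or> n = 0"
  shows "of_nat n * x ^ (n - 1) = of_nat n / x * x ^ n"
  using assms by (cases n) auto

lemma closed_form_quotient:
  fixes q :: real
  assumes N: "N \<ge> 1" and q: "0 < q" "q < 1" and uc: "u + c \<le> N"
  defines "A \<equiv> real (N - c) * q / real N" and "B \<equiv> 1 - real c * q / real N"
  shows "(A ^ u * B ^ v - q / real N * (real u * A ^ (u - 1) * B ^ v + real v * A ^ u * B ^ (v - 1))) / q ^ u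
       = B ^ v * (1 - real c / real N) ^ u * (1 - real u / real (N - c) - real v * q / (real N - real c * q))"
proof -
  let ?r = "1 - real c / real N"
  let ?\<alpha> = "real u / real (N - c)" and ?\<beta> = "real v * q / (real N - real c * q)"
  have cN: "c \<le> N" using uc by simp
  have "real c * q \<le> real N * q" using cN q by (intro mult_right_mono) auto
  also have "\<dots> < real N" using N q by simp
  finally have pos: "real N - real c * q > 0" by simp
  have B: "B = (real N - real c * q) / real N" using N by (simp add: B_def field_simps)
  have Ar: "A = q * ?r" using N cN by (simp add: A_def of_nat_diff field_simps)
  have A_term: "q / real N * (real u * A ^ (u - 1)) = A ^ u * ?\<alpha>"
  proof (cases "u = 0")
    case False
    then have "c < N" using uc by simp
    then have "A \<noteq> 0" using q N by (simp add: A_def)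
    then have "real u * A ^ (u - 1) = real u / A * A ^ u" by (intro of_nat_mult_power_pred) simp
    then show ?thesis using \<open>c < N\<close> q N by (simp add: A_def field_simps)
  qed simp
  have "B \<noteq> 0" using pos N by (simp add: B)
  then have "real v * B ^ (v - 1) = real v / B * B ^ v" by (intro of_nat_mult_power_pred) simp
  then have B_term: "q / real N * (real v * B ^ (v - 1)) = B ^ v * ?\<beta>"
    using pos N by (simp add: B field_simps)
  have "A ^ u * B ^ v - q / real N * (real u * A ^ (u - 1) * B ^ v + real v * A ^ u * B ^ (v - 1))
      = A ^ u * B ^ v - (q / real N * (real u * A ^ (u - 1)) * B ^ v + q / real N * (real v * B ^ (v - 1)) * A ^ u)"
    by (simp add: algebra_simps)
  also have "\<dots> = A ^ u * B ^ v - (A ^ u * ?\<alpha> * B ^ v + B ^ v * ?\<beta> * A ^ u)"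
    unfolding A_term B_term ..
  also have "\<dots> = A ^ u * (B ^ v * (1 - ?\<alpha> - ?\<beta>))" by (simp add: algebra_simps)
  also have "\<dots> = q ^ u * (B ^ v * ?r ^ u * (1 - ?\<alpha> - ?\<beta>))"
    unfolding Ar by (simp add: power_mult_distrib)
  finally show ?thesis using q by simp
qed

lemma cond_prob_ktilde_plus:
  assumes N: "N \<ge> 1" and q: "0 < q" "q < 1" and H0: "H0 \<subseteq> {1..N}"
    and cm: "c \<le> m" and mH: "m \<le> card H0"
  shows "cond_prob (pmodel N) (\<lambda>p. ktilde_plus H0 c N q p = c) (\<lambda>p. load H0 N q p (N + 1) = m)
       = (1 - real c * q / real N) ^ (N - card H0) * (1 - real c / real N) ^ (card H0 - m)
         * (1 - real (card H0 - m) / real (N - c) - real (N - card H0) * q / (real N - real c * q))"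
proof -
  let ?A = "real (N - c) * q / real N" and ?B = "1 - real c * q / real N"
  let ?V = "?A ^ (card H0 - m) * ?B ^ (N - card H0)
            - q / real N * (real (card H0 - m) * ?A ^ (card H0 - m - 1) * ?B ^ (N - card H0)
                            + real (N - card H0) * ?A ^ (card H0 - m) * ?B ^ (N - card H0 - 1))"
  let ?C = "real (card H0 choose m) * (1 - q) ^ m"
  have "?C \<noteq> 0" using mH q by simp
  have "card H0 \<le> N" using card_mono[OF _ H0] by simp
  have "cond_prob (pmodel N) (\<lambda>p. ktilde_plus H0 c N q p = c) (\<lambda>p. load H0 N q p (N + 1) = m)
      = (?C * ?V) / (?C * q ^ (card H0 - m))"
    unfolding cond_prob_def measure_ktilde_plus_load_top_eq[OF N q H0 cm] measure_load_top_eq[OF N q H0]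
    by (simp only: mult.assoc)
  also have "\<dots> = ?V / q ^ (card H0 - m)" by (rule mult_divide_mult_cancel_left[OF \<open>?C \<noteq> 0\<close>])
  also have "\<dots> = ?B ^ (N - card H0) * (1 - real c / real N) ^ (card H0 - m)
         * (1 - real (card H0 - m) / real (N - c) - real (N - card H0) * q / (real N - real c * q))"
    using \<open>card H0 \<le> N\<close> cm mH by (intro closed_form_quotient[OF N q]) arith
  finally show ?thesis .
qed

theorem corollary2:
  fixes N :: nat and H0 :: "nat set" and q :: real
  assumes "N \<ge> 1" and "H0 \<subseteq> {1..N}" and "0 < q" and "q < 1"
  shows "(\<forall>l\<le>N.
            measure (pmodel N) {p \<in> space (pmodel N). ktilde N q p = l}
              = (1 - q) / (1 - q + real (N - l) * q / real N)
                * measure (pmodel N) {p \<in> space (pmodel N). loadsum {1..N} N q p 1 l = l}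
          \<and> measure (pmodel N) {p \<in> space (pmodel N). loadsum {1..N} N q p 1 l = l}
              = real (N choose l) * (q * real l / real N) ^ l
                * (1 - q * real l / real N) ^ (N - l))
       \<and> (\<forall>c::nat. c \<ge> 1 \<longrightarrow>
            (\<forall>m. c \<le> m \<and> m \<le> card H0 \<longrightarrow>
              cond_prob (pmodel N) (\<lambda>p. ktilde_plus H0 c N q p = c)
                                   (\<lambda>p. load H0 N q p (N + 1) = m)
              = (1 - real c * q / real N) ^ (N - card H0)
                * (1 - real c / real N) ^ (card H0 - m)
                * (1 - real (card H0 - m) / real (N - c)
                     - real (N - card H0) * q / (real N - real c * q))))"
proof (intro conjI allI impI)
  fix l assume "l \<le> N"
  have "1 - q + real (N - l) * q / real N = 1 - q * real l / real N"
    using \<open>N \<ge> 1\<close> \<open>l \<le> N\<close> by (simp add: of_nat_diff field_simps)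
  then show "measure (pmodel N) {p \<in> space (pmodel N). ktilde N q p = l}
      = (1 - q) / (1 - q + real (N - l) * q / real N)
        * measure (pmodel N) {p \<in> space (pmodel N). loadsum {1..N} N q p 1 l = l}"
    using measure_ktilde_eq measure_loadsum_eq assms \<open>l \<le> N\<close> by (simp add: mult.commute)
  show "measure (pmodel N) {p \<in> space (pmodel N). loadsum {1..N} N q p 1 l = l}
      = real (N choose l) * (q * real l / real N) ^ l * (1 - q * real l / real N) ^ (N - l)"
    using measure_loadsum_eq assms \<open>l \<le> N\<close> by simp
next
  fix c m :: nat assume "c \<le> m \<and> m \<le> card H0"
  then show "cond_prob (pmodel N) (\<lambda>p. ktilde_plus H0 c N q p = c) (\<lambda>p. load H0 N q p (N + 1) = m)
      = (1 - real c * q / real N) ^ (N - card H0) * (1 - real c / real N) ^ (card H0 - m)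
        * (1 - real (card H0 - m) / real (N - c) - real (N - card H0) * q / (real N - real c * q))"
    using cond_prob_ktilde_plus assms by simp
qed

end
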